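(* Let $m\ge 1$, $n\ge 1$ and $k\ge 1$ be integers, and let $F:\mathbb{R}^{m+1}\to\mathbb{R}^{n+1}$ be a form of degree $k$ (every component of $F$ is a homogeneous polynomial of degree $k$) such that $|F(\bar x)|=|\bar x|^k$ for all $\bar x$, so that $F$ restricts to a map $\varphi:\mathbb{S}^m\to\mathbb{S}^n$. Assume $F$ is of minimal degree in its class, i.e. there is no form $G$ of degree strictly smaller than $k$ with $G|_{\mathbb{S}^m}=F|_{\mathbb{S}^m}$. If $\varphi$ is harmonic, then $\varphi$ has constant energy density $e(\varphi)=k(k+m-1)/2$ and $\Delta^0 F=0$ on $\mathbb{R}^{m+1}$.
   Context: $\mathbb{S}^m$ denotes the unit Euclidean sphere in $\mathbb{R}^{m+1}$ with its standard metric. $\Delta^0 F=-\sum_{i=1}^{m+1}\partial^2F/\partial (x^i)^2$ (componentwise Euclidean Laplacian with the geometers' sign convention). The energy density is $e(\varphi)=\frac12|d\varphi|^2$. A map is harmonic if its tension field $\tau(\varphi)=\operatorname{trace}\nabla d\varphi$ vanishes. *)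

theory Defs
  imports "HOL-Analysis.Analysis"
begin

definition hom_poly :: "nat \<Rightarrow> (real^'m \<Rightarrow> real) \<Rightarrow> bool" where
  "hom_poly k p \<longleftrightarrow> (\<exists>c :: ('m \<Rightarrow> nat) \<Rightarrow> real.
      p = (\<lambda>x. \<Sum>a\<in>{a. sum a UNIV = k}. c a * (\<Prod>i\<in>UNIV. (x $ i) ^ a i)))"

definition is_form :: "nat \<Rightarrow> (real^'m \<Rightarrow> real^'n) \<Rightarrow> bool" where
  "is_form k F \<longleftrightarrow> (\<forall>j. hom_poly k (\<lambda>x. F x $ j))"

definition unit_sphere :: "('a::real_normed_vector) set" where
  "unit_sphere = {x. norm x = 1}"

definition tangent_onb :: "real^'m \<Rightarrow> (real^'m) set \<Rightarrow> bool" where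
  "tangent_onb x B \<longleftrightarrow> B \<subseteq> {v. v \<bullet> x = 0} \<and> pairwise orthogonal B
      \<and> (\<forall>e\<in>B. norm e = 1) \<and> span B = {v. v \<bullet> x = 0}"

definition tangent_basis :: "real^'m \<Rightarrow> (real^'m) set" where
  "tangent_basis x = (SOME B. tangent_onb x B)"

definition geod :: "real^'m \<Rightarrow> real^'m \<Rightarrow> real \<Rightarrow> real^'m" where
  "geod x e t = cos t *\<^sub>R x + sin t *\<^sub>R e"

text \<open>d phi (e) and (nabla d phi)(e,e) as vectors of R^(n+1) (before projection to the
target), computed along the geodesic through x in direction e.\<close>
definition dphi :: "(real^'m \<Rightarrow> real^'n) \<Rightarrow> real^'m \<Rightarrow> real^'m \<Rightarrow> real^'n" where
  "dphi F x e = vector_derivative (\<lambda>t. F (geod x e t)) (at 0)"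

definition hess_amb :: "(real^'m \<Rightarrow> real^'n) \<Rightarrow> real^'m \<Rightarrow> real^'m \<Rightarrow> real^'n" where
  "hess_amb F x e = vector_derivative
      (\<lambda>s. vector_derivative (\<lambda>t. F (geod x e t)) (at s)) (at 0)"

text \<open>Tension field of phi = F restricted to the sphere, as a map into the unit sphere of
real^'n: tangential projection (at F x) of the trace of the Hessian.\<close>
definition tension :: "(real^'m \<Rightarrow> real^'n) \<Rightarrow> real^'m \<Rightarrow> real^'n" where
  "tension F x = (let v = (\<Sum>e\<in>tangent_basis x. hess_amb F x e)
                  in v - (v \<bullet> F x) *\<^sub>R F x)"

definition harmonic_sph :: "(real^'m \<Rightarrow> real^'n) \<Rightarrow> bool" where
  "harmonic_sph F \<longleftrightarrow> (\<forall>x\<in>unit_sphere. tension F x = 0)"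

definition energy_density :: "(real^'m \<Rightarrow> real^'n) \<Rightarrow> real^'m \<Rightarrow> real" where
  "energy_density F x = (\<Sum>e\<in>tangent_basis x. (norm (dphi F x e))\<^sup>2) / 2"

text \<open>Euclidean Laplacian with geometers' sign: - sum of pure second partials, componentwise.\<close>
definition second_partial :: "(real^'m \<Rightarrow> real^'n) \<Rightarrow> real^'m \<Rightarrow> real^'m \<Rightarrow> real^'n" where
  "second_partial F x u = vector_derivative
      (\<lambda>s. vector_derivative (\<lambda>t. F (x + t *\<^sub>R u)) (at s)) (at 0)"

definition lap0 :: "(real^'m \<Rightarrow> real^'n) \<Rightarrow> real^'m \<Rightarrow> real^'n" where
  "lap0 F x = - (\<Sum>i\<in>UNIV. second_partial F x (axis i 1))"

end

theory Submission
  imports Defs "HOL-Computational_Algebra.Polynomial" "HOL-Library.FuncSet"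
begin

text \<open>
  Write \<open>L\<close> for the Euclidean Laplacian \<open>-\<Delta>\<^sup>0 F\<close> of the components of \<open>F\<close>. Along a great
  circle \<open>cos t x + sin t e\<close> the second derivative of \<open>F\<close> is \<open>D\<^sup>2F(e,e) - DF(x)\<close>, and Euler's
  identities \<open>DF(x) = k F\<close>, \<open>D\<^sup>2F(x,x) = k(k-1) F\<close> turn its trace over a tangent frame into
  \<open>L - (k(k-1) + m k) F\<close>. Hence \<open>\<phi>\<close> is harmonic iff \<open>L\<close> is parallel to \<open>F\<close> on the sphere,
  and by homogeneity \<open>(L\<cdot>F) F\<^sub>j = |x|\<^sup>2\<^sup>k L\<^sub>j\<close> everywhere.

  Minimality of the degree means that some component \<open>F\<^sub>j\<close> is not divisible by \<open>|x|\<^sup>2\<close>. For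
  \<open>m \<ge> 1\<close>, \<open>|x|\<^sup>2 = x\<^sub>0\<^sup>2 + r\<close> with \<open>r = x\<^sub>1\<^sup>2 + \<dots> + x\<^sub>m\<^sup>2\<close> is a prime polynomial: every form
  is \<open>x\<^sub>0 B + C\<close> modulo \<open>|x|\<^sup>2\<close> with \<open>B, C\<close> free of \<open>x\<^sub>0\<close>, and \<open>(x\<^sub>0 B\<^sub>1 + C\<^sub>1)(x\<^sub>0 B\<^sub>2 + C\<^sub>2)\<close> is a
  multiple of \<open>|x|\<^sup>2\<close> only if \<open>C\<^sub>1 C\<^sub>2 = r B\<^sub>1 B\<^sub>2\<close> and \<open>B\<^sub>1 C\<^sub>2 = - B\<^sub>2 C\<^sub>1\<close>, which for \<open>r \<ge> 0\<close>,
  \<open>r \<noteq> 0\<close> forces one of the two remainders to vanish. So \<open>|x|\<^sup>2\<^sup>k\<close> divides the form \<open>L\<cdot>F\<close>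
  of degree \<open>2k - 2\<close>, which therefore vanishes, and with it \<open>L\<close>.

  Finally, differentiating \<open>|F(x)|\<^sup>2 = |x|\<^sup>2\<^sup>k\<close> twice in each coordinate direction gives
  \<open>|DF|\<^sup>2 + F\<cdot>L = k(2k + m - 1)\<close> on the sphere; removing the radial part \<open>|DF(x)|\<^sup>2 = k\<^sup>2\<close>
  leaves \<open>2 e(\<phi>) = k(k + m - 1)\<close>.
\<close>

section \<open>Homogeneous polynomials\<close>

inductive hpoly :: "nat \<Rightarrow> (real^'m \<Rightarrow> real) \<Rightarrow> bool" where
  hpoly_const: "hpoly 0 (\<lambda>x. c)"
| hpoly_coord_mult: "hpoly d p \<Longrightarrow> hpoly (Suc d) (\<lambda>x. x$i * p x)"
| hpoly_add: "hpoly d p \<Longrightarrow> hpoly d q \<Longrightarrow> hpoly d (\<lambda>x. p x + q x)"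

lemma hpoly_zero: "hpoly d (\<lambda>x. 0)"
proof (induction d)
  case 0
  show ?case using hpoly_const[of 0] by simp
next
  case (Suc d)
  from hpoly_coord_mult[OF Suc, of undefined] show ?case by simp
qed

lemma hpoly_cmult: "hpoly d p \<Longrightarrow> hpoly d (\<lambda>x. c * p x)"
proof (induction rule: hpoly.induct)
  case (hpoly_const c')
  show ?case using hpoly.hpoly_const[of "c * c'"] by simp
next
  case (hpoly_coord_mult d p i)
  from hpoly.hpoly_coord_mult[OF hpoly_coord_mult.IH, of i] show ?case by (simp add: ac_simps)
next
  case (hpoly_add d p q)
  from hpoly.hpoly_add[OF hpoly_add.IH] show ?case by (simp add: algebra_simps)
qed

lemma hpoly_sum:
  "finite A \<Longrightarrow> (\<And>a. a \<in> A \<Longrightarrow> hpoly d (f a)) \<Longrightarrow> hpoly d (\<lambda>x. \<Sum>a\<in>A. f a x)"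
proof (induction A rule: finite_induct)
  case empty
  then show ?case using hpoly_zero by simp
next
  case (insert a A)
  then show ?case using hpoly_add[of d "f a" "\<lambda>x. \<Sum>a\<in>A. f a x"] by simp
qed

lemma hpoly_mult: "hpoly a p \<Longrightarrow> hpoly b q \<Longrightarrow> hpoly (a + b) (\<lambda>x. p x * q x)"
proof (induction rule: hpoly.induct)
  case (hpoly_const c)
  then show ?case by (simp add: hpoly_cmult)
next
  case (hpoly_coord_mult d p i)
  from hpoly.hpoly_coord_mult[OF hpoly_coord_mult.IH[OF hpoly_coord_mult.prems], of i]
  show ?case by (simp add: ac_simps)
next
  case (hpoly_add d p q')
  from hpoly.hpoly_add[OF hpoly_add.IH[OF hpoly_add.prems]] show ?case by (simp add: algebra_simps)
qed

lemma hpoly_coord: "hpoly 1 (\<lambda>x. x$i)"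
  using hpoly_coord_mult[OF hpoly_const[of 1], of i] by simp

lemma hpoly_power: "hpoly a p \<Longrightarrow> hpoly (a * n) (\<lambda>x. p x ^ n)"
proof (induction n)
  case 0
  then show ?case using hpoly_const[of 1] by simp
next
  case (Suc n)
  then show ?case using hpoly_mult[of a p "a * n" "\<lambda>x. p x ^ n"] by (simp add: ac_simps)
qed

lemma hpoly_homogeneous: "hpoly d p \<Longrightarrow> p (t *\<^sub>R x) = t ^ d * p x"
  by (induction rule: hpoly.induct) (auto simp: algebra_simps)

lemma hpoly_at_0: "hpoly d p \<Longrightarrow> d \<ge> 1 \<Longrightarrow> p 0 = 0"
  using hpoly_homogeneous[of d p 0 0] by (cases d) auto

lemma norm_power2_eq_sum: "norm (x :: real^'m) ^ 2 = (\<Sum>i\<in>UNIV. x$i * x$i)"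
  by (simp add: power2_norm_eq_inner inner_vec_def)

lemma hpoly_norm_power2: "hpoly 2 (\<lambda>x :: real^'m. norm x ^ 2)"
  unfolding norm_power2_eq_sum
  using hpoly_mult[OF hpoly_coord hpoly_coord] by (intro hpoly_sum) (auto simp: numeral_2_eq_2)

definition monomial :: "('m::finite \<Rightarrow> nat) \<Rightarrow> real^'m \<Rightarrow> real" where
  "monomial a x = (\<Prod>i\<in>UNIV. (x $ i) ^ a i)"

definition exponents :: "nat \<Rightarrow> ('m::finite \<Rightarrow> nat) set" where
  "exponents k = {a. sum a UNIV = k}"

lemma finite_exponents: "finite (exponents k :: ('m::finite \<Rightarrow> nat) set)"
proof (rule finite_subset)
  show "exponents k \<subseteq> Pi\<^sub>E (UNIV::'m set) (\<lambda>_. {..k})"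
  proof
    fix a :: "'m \<Rightarrow> nat"
    assume "a \<in> exponents k"
    then have "a i \<le> k" for i
      unfolding exponents_def using member_le_sum[of i UNIV a] by auto
    then show "a \<in> Pi\<^sub>E UNIV (\<lambda>_. {..k})" by (simp add: PiE_UNIV_domain)
  qed
qed (intro finite_PiE; simp)

lemma hom_poly_monomial: "hom_poly k p \<longleftrightarrow> (\<exists>c. p = (\<lambda>x. \<Sum>a\<in>exponents k. c a * monomial a x))"
  unfolding hom_poly_def exponents_def monomial_def by simp

lemma monomial_Suc: "monomial (a(i := Suc (a i))) x = x$i * monomial a x"
proof -
  have "monomial (a(i := Suc (a i))) x = (\<Prod>j\<in>UNIV. (x$j)^a j * (if j = i then x$j else 1))"
    unfolding monomial_def by (intro prod.cong) auto
  also have "\<dots> = monomial a x * x$i" unfolding monomial_def prod.distrib by (simp add: prod.delta)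
  finally show ?thesis by simp
qed

lemma sum_fun_upd_UNIV:
  fixes a :: "'m::finite \<Rightarrow> nat"
  shows "sum (a(i := v)) UNIV = sum a UNIV - a i + v"
  using sum.remove[of UNIV i "a(i := v)"] sum.remove[of UNIV i a] by auto

lemma hom_poly_imp_hpoly: "hom_poly k p \<Longrightarrow> hpoly k p"
proof -
  have "hpoly (sum a A) (\<lambda>x::real^'m. \<Prod>i\<in>A. (x $ i) ^ a i)" if "finite A" for A a
    using that
  proof (induction A rule: finite_induct)
    case empty
    then show ?case using hpoly_const[of 1] by simp
  next
    case (insert j A)
    from hpoly_mult[OF hpoly_power[OF hpoly_coord] insert.IH] insert.hyps show ?case by simp
  qed
  then have "hpoly k (monomial a :: real^'m \<Rightarrow> real)" if "a \<in> exponents k" for a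
    using that unfolding exponents_def monomial_def by force
  then show "hom_poly k p \<Longrightarrow> hpoly k p"
    unfolding hom_poly_monomial by (auto intro!: hpoly_sum[OF finite_exponents] hpoly_cmult)
qed

lemma hom_poly_coord_mult:
  fixes p :: "real^'m::finite \<Rightarrow> real"
  assumes "hom_poly d p"
  shows "hom_poly (Suc d) (\<lambda>x. x$i * p x)"
proof -
  obtain c where p: "p = (\<lambda>x. \<Sum>a\<in>exponents d. c a * monomial a x)"
    using assms unfolding hom_poly_monomial by blast
  define raise where "raise a = a(i := Suc (a i))" for a :: "'m \<Rightarrow> nat"
  define c' where "c' b = (if b i \<ge> 1 then c (b(i := b i - 1)) else 0)" for b :: "'m \<Rightarrow> nat"
  have raise_exponents: "raise ` exponents d \<subseteq> exponents (Suc d)"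
  proof
    fix b assume "b \<in> raise ` exponents d"
    then obtain a where "a \<in> exponents d" "b = raise a" by blast
    moreover have "a i \<le> sum a UNIV" by (rule member_le_sum) auto
    ultimately show "b \<in> exponents (Suc d)"
      using sum_fun_upd_UNIV[of a i "Suc (a i)"] unfolding raise_def exponents_def by simp
  qed
  have "inj raise" unfolding raise_def inj_def by (auto simp: fun_eq_iff)
  have c'_raise: "c' (raise a) = c a" for a unfolding c'_def raise_def by simp
  have c'_outside: "c' b = 0" if "b \<in> exponents (Suc d) - raise ` exponents d" for b
  proof (rule ccontr)
    assume "c' b \<noteq> 0"
    then have bi: "b i \<ge> 1" unfolding c'_def by (auto split: if_splits)
    then have "raise (b(i := b i - 1)) = b" unfolding raise_def by (auto simp: fun_eq_iff)
    moreover have "b(i := b i - 1) \<in> exponents d"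
      using that bi member_le_sum[of i UNIV b] sum_fun_upd_UNIV[of b i] unfolding exponents_def by simp
    ultimately show False using that by (metis DiffD2 imageI)
  qed
  have "x$i * p x = (\<Sum>b\<in>exponents (Suc d). c' b * monomial b x)" for x
  proof -
    have "x$i * p x = (\<Sum>a\<in>exponents d. c' (raise a) * monomial (raise a) x)"
      unfolding p raise_def monomial_Suc c'_raise[unfolded raise_def]
      by (simp add: sum_distrib_left algebra_simps)
    also have "\<dots> = (\<Sum>b\<in>raise ` exponents d. c' b * monomial b x)"
      using sum.reindex[of raise "exponents d" "\<lambda>b. c' b * monomial b x"] \<open>inj raise\<close>
      by (simp add: inj_on_def inj_def)
    also have "\<dots> = (\<Sum>b\<in>exponents (Suc d). c' b * monomial b x)"
      by (intro sum.mono_neutral_left finite_exponents raise_exponents) (simp add: c'_outside)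
    finally show ?thesis .
  qed
  then show ?thesis unfolding hom_poly_monomial by blast
qed

lemma hpoly_imp_hom_poly: "hpoly k p \<Longrightarrow> hom_poly k (p :: real^'m::finite \<Rightarrow> real)"
proof (induction rule: hpoly.induct)
  case (hpoly_const c)
  have "exponents 0 = {(\<lambda>_. 0) :: 'm \<Rightarrow> nat}" unfolding exponents_def by (auto simp: fun_eq_iff)
  then show ?case unfolding hom_poly_monomial by (intro exI[of _ "\<lambda>_. c"]) (simp add: monomial_def)
next
  case (hpoly_coord_mult d p i)
  then show ?case using hom_poly_coord_mult by blast
next
  case (hpoly_add d p q)
  then obtain c1 c2 where "p = (\<lambda>x. \<Sum>a\<in>exponents d. c1 a * monomial a x)"
    and "q = (\<lambda>x. \<Sum>a\<in>exponents d. c2 a * monomial a x)"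
    unfolding hom_poly_monomial by blast
  then show ?case unfolding hom_poly_monomial
    by (intro exI[of _ "\<lambda>a. c1 a + c2 a"]) (simp add: algebra_simps sum.distrib)
qed

text \<open>Homogeneous of degree \<open>d - j\<close>, where a negative degree means the zero function (with
  truncated subtraction, \<open>hpoly (d - j)\<close> would admit non-zero constants).\<close>
definition hpoly_minus :: "nat \<Rightarrow> nat \<Rightarrow> (real^'m \<Rightarrow> real) \<Rightarrow> bool" where
  "hpoly_minus d j p \<longleftrightarrow> (if j \<le> d then hpoly (d - j) p else p = (\<lambda>x. 0))"

lemma hpoly_minus_0 [simp]: "hpoly_minus d 0 p \<longleftrightarrow> hpoly d p"
  by (simp add: hpoly_minus_def)

lemma hpoly_minus_Suc_Suc: "hpoly_minus (Suc d) (Suc j) p \<longleftrightarrow> hpoly_minus d j p"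
  by (simp add: hpoly_minus_def)

lemma hpoly_minus_shift: "j \<le> d \<Longrightarrow> hpoly_minus (d - j) i p \<longleftrightarrow> hpoly_minus d (j + i) p"
  by (auto simp: hpoly_minus_def)

lemma hpoly_minus_zero: "hpoly_minus d j (\<lambda>x. 0)"
  by (simp add: hpoly_minus_def hpoly_zero)

lemma hpoly_minus_coord_mult:
  assumes "hpoly_minus d j p"
  shows "hpoly_minus (Suc d) j (\<lambda>x. x$i * p x)"
proof (cases "j \<le> d")
  case True
  then show ?thesis
    using assms hpoly_coord_mult[of "d - j" p i] by (simp add: hpoly_minus_def Suc_diff_le)
qed (use assms in \<open>auto simp: hpoly_minus_def hpoly_zero\<close>)

lemma hpoly_minus_add:
  "hpoly_minus d j p \<Longrightarrow> hpoly_minus d j q \<Longrightarrow> hpoly_minus d j (\<lambda>x. p x + q x)"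
  unfolding hpoly_minus_def by (auto intro: hpoly_add)

lemma hpoly_minus_mult:
  assumes "hpoly_minus d j p" and "hpoly e q"
  shows "hpoly_minus (d + e) j (\<lambda>x. q x * p x)"
proof (cases "j \<le> d")
  case True
  then show ?thesis
    using assms hpoly_mult[of e q "d - j" p] by (simp add: hpoly_minus_def add.commute)
qed (use assms in \<open>auto simp: hpoly_minus_def hpoly_zero\<close>)

lemma hpoly_minus_imp_hpoly: "hpoly_minus d j p \<Longrightarrow> hpoly (d - j) p"
  by (auto simp: hpoly_minus_def hpoly_zero split: if_splits)

lemma hpoly_minus_zero_iff: "j > d \<Longrightarrow> hpoly_minus d j p \<longleftrightarrow> p = (\<lambda>x. 0)"
  by (simp add: hpoly_minus_def)

section \<open>The squared norm is prime\<close>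

definition poly_on_lines :: "(real^'m \<Rightarrow> real) \<Rightarrow> bool" where
  "poly_on_lines p \<longleftrightarrow> (\<forall>x v. \<exists>c. \<forall>t. p (x + t *\<^sub>R v) = poly c t)"

lemma poly_on_lines_const: "poly_on_lines (\<lambda>x. c)"
  unfolding poly_on_lines_def by (intro allI exI[of _ "[:c:]"]) simp

lemma poly_on_lines_coord: "poly_on_lines (\<lambda>x :: real^'m. x$i)"
  unfolding poly_on_lines_def
proof (intro allI)
  fix x v :: "real^'m"
  show "\<exists>c. \<forall>t. (x + t *\<^sub>R v) $ i = poly c t"
    by (rule exI[of _ "[:x$i, v$i:]"]) (simp add: algebra_simps)
qed

lemma poly_on_lines_add: "poly_on_lines p \<Longrightarrow> poly_on_lines q \<Longrightarrow> poly_on_lines (\<lambda>x. p x + q x)"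
  unfolding poly_on_lines_def by (metis poly_add)

lemma poly_on_lines_mult: "poly_on_lines p \<Longrightarrow> poly_on_lines q \<Longrightarrow> poly_on_lines (\<lambda>x. p x * q x)"
  unfolding poly_on_lines_def by (metis poly_mult)

lemma poly_on_lines_diff: "poly_on_lines p \<Longrightarrow> poly_on_lines q \<Longrightarrow> poly_on_lines (\<lambda>x. p x - q x)"
  using poly_on_lines_add[OF _ poly_on_lines_mult[OF poly_on_lines_const[of "-1"]]] by simp

lemma poly_on_lines_power: "poly_on_lines p \<Longrightarrow> poly_on_lines (\<lambda>x. p x ^ n)"
  by (induction n) (auto intro: poly_on_lines_const dest: poly_on_lines_mult)

lemma hpoly_imp_poly_on_lines: "hpoly d p \<Longrightarrow> poly_on_lines p"
  by (induction rule: hpoly.induct)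
    (auto intro: poly_on_lines_const poly_on_lines_add poly_on_lines_mult poly_on_lines_coord)

lemma hpoly_minus_imp_poly_on_lines: "hpoly_minus d j p \<Longrightarrow> poly_on_lines p"
  unfolding hpoly_minus_def by (auto intro: hpoly_imp_poly_on_lines poly_on_lines_const split: if_splits)

text \<open>On the line through a non-zero of \<open>p\<close> and a non-zero of \<open>q\<close> both are non-zero univariate
  polynomials.\<close>
lemma poly_on_lines_mult_eq_0:
  assumes "poly_on_lines p" "poly_on_lines q" "\<And>x. p x * q x = 0"
  shows "(\<forall>x. p x = 0) \<or> (\<forall>x. q x = 0)"
proof (rule ccontr)
  assume "\<not> ?thesis"
  then obtain a b where a: "p a \<noteq> 0" and b: "q b \<noteq> 0" by auto
  obtain c1 where c1: "\<And>t. p (a + t *\<^sub>R (b - a)) = poly c1 t"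
    using assms(1) unfolding poly_on_lines_def by blast
  obtain c2 where c2: "\<And>t. q (a + t *\<^sub>R (b - a)) = poly c2 t"
    using assms(2) unfolding poly_on_lines_def by blast
  have "poly (c1 * c2) = poly 0" using assms(3) c1 c2 by (auto simp: fun_eq_iff) (metis)
  then have "c1 * c2 = 0" using poly_eq_poly_eq_iff by blast
  moreover have "c1 \<noteq> 0" using c1[of 0] a by auto
  moreover have "c2 \<noteq> 0" using c2[of 1] b by auto
  ultimately show False by simp
qed

definition coord_free :: "'m::finite \<Rightarrow> (real^'m \<Rightarrow> real) \<Rightarrow> bool" where
  "coord_free i0 U \<longleftrightarrow> (\<forall>x t. U (x + t *\<^sub>R axis i0 1) = U x)"

lemma coord_free_const: "coord_free i0 (\<lambda>x. c)"
  unfolding coord_free_def by simp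

lemma coord_free_add: "coord_free i0 U \<Longrightarrow> coord_free i0 V \<Longrightarrow> coord_free i0 (\<lambda>x. U x + V x)"
  unfolding coord_free_def by simp

lemma coord_free_mult: "coord_free i0 U \<Longrightarrow> coord_free i0 V \<Longrightarrow> coord_free i0 (\<lambda>x. U x * V x)"
  unfolding coord_free_def by simp

lemma coord_free_coord: "i \<noteq> i0 \<Longrightarrow> coord_free i0 (\<lambda>x. x$i)"
  unfolding coord_free_def by (simp add: axis_def)

definition sqnorm_except :: "'m::finite \<Rightarrow> real^'m \<Rightarrow> real" where
  "sqnorm_except i0 x = (\<Sum>i\<in>UNIV-{i0}. x$i * x$i)"

lemma norm_power2_split: "norm x ^ 2 = x$i0 * x$i0 + sqnorm_except i0 x"
  unfolding norm_power2_eq_sum sqnorm_except_def by (simp add: sum.remove[of UNIV i0])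

lemma hpoly_sqnorm_except: "hpoly 2 (sqnorm_except i0)"
  unfolding sqnorm_except_def
  using hpoly_mult[OF hpoly_coord hpoly_coord] by (intro hpoly_sum) (auto simp: numeral_2_eq_2)

lemma coord_free_sqnorm_except: "coord_free i0 (sqnorm_except i0)"
  unfolding coord_free_def sqnorm_except_def by (auto intro!: sum.cong simp: axis_def)

lemma sqnorm_except_nonneg: "sqnorm_except i0 x \<ge> 0"
  unfolding sqnorm_except_def by (intro sum_nonneg) auto

lemma sqnorm_except_not_zero:
  assumes "CARD('m::finite) \<ge> 2"
  shows "\<exists>x::real^'m. sqnorm_except i0 x \<noteq> 0"
proof -
  have "\<not> UNIV \<subseteq> {i0}" using assms card_mono[of "{i0}" UNIV] by auto
  then obtain l :: 'm where "l \<noteq> i0" by auto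
  then have "sqnorm_except i0 (axis l 1) = 1"
    unfolding sqnorm_except_def by (simp add: axis_def if_distrib[of "\<lambda>a. a * _"] cong: if_cong)
  then show ?thesis by (intro exI[of _ "axis l 1"]) simp
qed

text \<open>Division with remainder by \<open>norm x ^ 2\<close> as a polynomial in \<open>x$i0\<close>, using
  \<open>x$i0 ^ 2 = norm x ^ 2 - sqnorm_except i0 x\<close>.\<close>
lemma hpoly_sqnorm_division:
  assumes "hpoly d A"
  shows "\<exists>Q B C. hpoly_minus d 2 Q \<and> hpoly_minus d 1 B \<and> hpoly d C
    \<and> coord_free i0 B \<and> coord_free i0 C \<and> (\<forall>x. A x = norm x ^ 2 * Q x + x$i0 * B x + C x)"
  using assms
proof (induction rule: hpoly.induct)
  case (hpoly_const c)
  show ?case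
    by (rule exI[of _ "\<lambda>x. 0"], rule exI[of _ "\<lambda>x. 0"], rule exI[of _ "\<lambda>x. c"])
      (simp add: hpoly.hpoly_const hpoly_minus_zero coord_free_const)
next
  case (hpoly_coord_mult d p i)
  then obtain Q B C where Q: "hpoly_minus d 2 Q" and B: "hpoly_minus d 1 B" and C: "hpoly d C"
    and fB: "coord_free i0 B" and fC: "coord_free i0 C"
    and p: "\<forall>x. p x = norm x ^ 2 * Q x + x$i0 * B x + C x" by blast
  show ?case
  proof (cases "i = i0")
    case False
    have "x$i * p x = norm x ^ 2 * (x$i * Q x) + x$i0 * (x$i * B x) + x$i * C x" for x
      using p by (simp add: algebra_simps)
    then show ?thesis
      using hpoly_minus_coord_mult[OF Q] hpoly_minus_coord_mult[OF B] hpoly.hpoly_coord_mult[OF C]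
        coord_free_mult[OF coord_free_coord[OF False] fB] coord_free_mult[OF coord_free_coord[OF False] fC]
      by blast
  next
    case True
    have "hpoly_minus (Suc d) 2 (\<lambda>x. x$i0 * Q x + B x)"
      using B hpoly_minus_Suc_Suc[of d 1 B]
      by (intro hpoly_minus_add hpoly_minus_coord_mult Q) (simp add: numeral_2_eq_2)
    moreover have "hpoly_minus (Suc d) 1 C"
      using C by (simp add: hpoly_minus_def)
    moreover have "hpoly (Suc d) (\<lambda>x. - sqnorm_except i0 x * B x)"
      using hpoly_minus_mult[OF B hpoly_cmult[OF hpoly_sqnorm_except, of "-1"]]
      by (simp add: hpoly_minus_def split: if_splits)
    moreover have "coord_free i0 (\<lambda>x. - sqnorm_except i0 x * B x)"
      using coord_free_mult[OF coord_free_sqnorm_except fB] unfolding coord_free_def by simp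
    moreover have "x$i * p x = norm x ^ 2 * (x$i0 * Q x + B x) + x$i0 * C x
        + (- sqnorm_except i0 x * B x)" for x
      using p True by (simp add: norm_power2_split[of x i0] algebra_simps)
    ultimately show ?thesis using fC by blast
  qed
next
  case (hpoly_add d p q)
  then obtain Q1 B1 C1 Q2 B2 C2 where Q: "hpoly_minus d 2 Q1" "hpoly_minus d 2 Q2"
    and B: "hpoly_minus d 1 B1" "hpoly_minus d 1 B2" and C: "hpoly d C1" "hpoly d C2"
    and fB: "coord_free i0 B1" "coord_free i0 B2" and fC: "coord_free i0 C1" "coord_free i0 C2"
    and "\<forall>x. p x = norm x ^ 2 * Q1 x + x$i0 * B1 x + C1 x"
    and "\<forall>x. q x = norm x ^ 2 * Q2 x + x$i0 * B2 x + C2 x"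
    by blast
  then have "p x + q x = norm x ^ 2 * (Q1 x + Q2 x) + x$i0 * (B1 x + B2 x) + (C1 x + C2 x)" for x
    by (simp add: algebra_simps)
  then show ?case
    using hpoly_minus_add[OF Q] hpoly_minus_add[OF B] hpoly.hpoly_add[OF C]
      coord_free_add[OF fB] coord_free_add[OF fC]
    by blast
qed

lemma coord_affine_eq_sqnorm_mult:
  fixes U V W :: "real^'m::finite \<Rightarrow> real"
  assumes fU: "coord_free i0 U" and fV: "coord_free i0 V" and W: "poly_on_lines W"
    and eq: "\<And>x. x$i0 * U x + V x = norm x ^ 2 * W x"
  shows "U x = 0 \<and> V x = 0"
proof -
  define e where "e = (axis i0 1 :: real^'m)"
  define y where "y = x + (- (x$i0)) *\<^sub>R e"
  have "y + t *\<^sub>R e = x + (t - x$i0) *\<^sub>R e" for t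
    unfolding y_def by (simp add: algebra_simps)
  then have U: "U (y + t *\<^sub>R e) = U x" and V: "V (y + t *\<^sub>R e) = V x" for t
    using fU fV unfolding coord_free_def e_def by simp_all
  obtain c where c: "\<And>t. W (y + t *\<^sub>R e) = poly c t" using W unfolding poly_on_lines_def by blast
  have "(y + t *\<^sub>R e) $ i0 = t" for t unfolding y_def e_def by (simp add: axis_def)
  moreover have "sqnorm_except i0 (y + t *\<^sub>R e) = sqnorm_except i0 y" for t
    using coord_free_sqnorm_except unfolding coord_free_def e_def by blast
  ultimately have "t * U x + V x = (t * t + sqnorm_except i0 y) * poly c t" for t
    using eq[of "y + t *\<^sub>R e"] norm_power2_split[of "y + t *\<^sub>R e" i0] U V c by simp
  then have "poly [:V x, U x:] = poly ([:sqnorm_except i0 y, 0, 1:] * c)"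
    by (auto simp: fun_eq_iff algebra_simps)
  then have pc: "[:V x, U x:] = [:sqnorm_except i0 y, 0, 1:] * c"
    using poly_eq_poly_eq_iff by blast
  have "c = 0"
  proof (rule ccontr)
    assume "c \<noteq> 0"
    then have "degree ([:sqnorm_except i0 y, 0, 1:] * c) = 2 + degree c" by (subst degree_mult_eq) auto
    moreover have "degree [:V x, U x:] \<le> 1" by simp
    ultimately show False using pc by simp
  qed
  then show ?thesis using pc by simp
qed

text \<open>The hypotheses are the real and imaginary parts of \<open>(c1 + b1 \<i> sqrt r) (c2 + b2 \<i> sqrt r) = 0\<close>.\<close>
lemma conj_product_eq_0:
  fixes r b1 c1 b2 c2 :: real
  assumes r: "r \<ge> 0" and re: "c1 * c2 = r * (b1 * b2)" and im: "b1 * c2 = - (b2 * c1)"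
  shows "c1 * c2 = 0 \<and> r * (b1 * c2) = 0 \<and> r * (b2 * c1) = 0 \<and> r * (b1 * b2) = 0"
proof -
  have "(c1*c2)^2 = r * ((b1*c2) * (b2*c1))" using re by (simp add: power2_eq_square algebra_simps)
  also have "\<dots> = - (r * (b1*c2)^2)" using im by (simp add: power2_eq_square algebra_simps)
  finally have "(c1*c2)^2 + r * (b1*c2)^2 = 0" by simp
  moreover have "(c1*c2)^2 \<ge> 0" "r * (b1*c2)^2 \<ge> 0" using r by auto
  ultimately have "c1 * c2 = 0" "r * (b1 * c2) = 0" by (simp_all add: add_nonneg_eq_0_iff)
  then show ?thesis using re im by simp
qed

lemma coord_affine_product_eq_sqnorm_mult:
  fixes B1 C1 B2 C2 :: "real^'m::finite \<Rightarrow> real"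
  assumes card: "CARD('m) \<ge> 2"
    and fB: "coord_free i0 B1" "coord_free i0 B2" and fC: "coord_free i0 C1" "coord_free i0 C2"
    and lB: "poly_on_lines B1" "poly_on_lines B2" and lC: "poly_on_lines C1" "poly_on_lines C2"
    and W: "poly_on_lines W"
    and eq: "\<And>x. (x$i0 * B1 x + C1 x) * (x$i0 * B2 x + C2 x) = norm x ^ 2 * W x"
  shows "(\<forall>x. B1 x = 0 \<and> C1 x = 0) \<or> (\<forall>x. B2 x = 0 \<and> C2 x = 0)"
proof -
  let ?r = "sqnorm_except i0"
  have "x$i0 * (B1 x * C2 x + B2 x * C1 x) + (C1 x * C2 x - ?r x * (B1 x * B2 x))
      = norm x ^ 2 * (W x - B1 x * B2 x)" for x
    using eq[of x] norm_power2_split[of x i0] by (simp add: algebra_simps)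
  moreover have "coord_free i0 (\<lambda>x. B1 x * C2 x + B2 x * C1 x)"
    "coord_free i0 (\<lambda>x. C1 x * C2 x - ?r x * (B1 x * B2 x))"
    using fB fC coord_free_sqnorm_except[of i0] unfolding coord_free_def by simp_all
  moreover have "poly_on_lines (\<lambda>x. W x - B1 x * B2 x)"
    by (intro poly_on_lines_diff poly_on_lines_mult W lB)
  ultimately have UV: "B1 x * C2 x + B2 x * C1 x = 0 \<and> C1 x * C2 x - ?r x * (B1 x * B2 x) = 0" for x
    using coord_affine_eq_sqnorm_mult by blast
  have pointwise: "C1 x * C2 x = 0 \<and> ?r x * (B1 x * C2 x) = 0 \<and> ?r x * (B2 x * C1 x) = 0
      \<and> ?r x * (B1 x * B2 x) = 0" for x
    using UV[of x] by (intro conj_product_eq_0 sqnorm_except_nonneg) (auto simp: algebra_simps)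
  have r: "poly_on_lines ?r" "\<not> (\<forall>x. ?r x = 0)"
    using hpoly_imp_poly_on_lines[OF hpoly_sqnorm_except] sqnorm_except_not_zero[OF card] by auto
  have "\<forall>x. B1 x * C2 x = 0"
    using poly_on_lines_mult_eq_0[OF r(1) poly_on_lines_mult[OF lB(1) lC(2)]] pointwise r(2) by blast
  then have B1_C2: "(\<forall>x. B1 x = 0) \<or> (\<forall>x. C2 x = 0)"
    using poly_on_lines_mult_eq_0[OF lB(1) lC(2)] by blast
  have "\<forall>x. B2 x * C1 x = 0"
    using poly_on_lines_mult_eq_0[OF r(1) poly_on_lines_mult[OF lB(2) lC(1)]] pointwise r(2) by blast
  then have B2_C1: "(\<forall>x. B2 x = 0) \<or> (\<forall>x. C1 x = 0)"
    using poly_on_lines_mult_eq_0[OF lB(2) lC(1)] by blast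
  have "\<forall>x. B1 x * B2 x = 0"
    using poly_on_lines_mult_eq_0[OF r(1) poly_on_lines_mult[OF lB]] pointwise r(2) by blast
  then have B1_B2: "(\<forall>x. B1 x = 0) \<or> (\<forall>x. B2 x = 0)"
    using poly_on_lines_mult_eq_0[OF lB] by blast
  have C1_C2: "(\<forall>x. C1 x = 0) \<or> (\<forall>x. C2 x = 0)"
    using poly_on_lines_mult_eq_0[OF lC] pointwise by blast
  from B1_C2 B2_C1 B1_B2 C1_C2 show ?thesis by blast
qed

definition sqnorm_dvd :: "nat \<Rightarrow> (real^'m::finite \<Rightarrow> real) \<Rightarrow> bool" where
  "sqnorm_dvd k p \<longleftrightarrow> (\<exists>H. hpoly_minus k 2 H \<and> (\<forall>x. p x = norm x ^ 2 * H x))"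

lemma sqnorm_prime:
  fixes A F W :: "real^'m::finite \<Rightarrow> real"
  assumes card: "CARD('m) \<ge> 2" and A: "hpoly d A" and F: "hpoly k F" and F_not: "\<not> sqnorm_dvd k F"
    and W: "poly_on_lines W" and eq: "\<And>x. A x * F x = norm x ^ 2 * W x"
  shows "\<exists>Q. hpoly_minus d 2 Q \<and> (\<forall>x. A x = norm x ^ 2 * Q x)"
proof -
  fix i0 :: 'm
  obtain Q1 B1 C1 where Q1: "hpoly_minus d 2 Q1" and B1: "hpoly_minus d 1 B1" and C1: "hpoly d C1"
    and fB1: "coord_free i0 B1" and fC1: "coord_free i0 C1"
    and A_eq: "\<forall>x. A x = norm x ^ 2 * Q1 x + x$i0 * B1 x + C1 x"
    using hpoly_sqnorm_division[OF A] by blast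
  obtain Q2 B2 C2 where Q2: "hpoly_minus k 2 Q2" and B2: "hpoly_minus k 1 B2" and C2: "hpoly k C2"
    and fB2: "coord_free i0 B2" and fC2: "coord_free i0 C2"
    and F_eq: "\<forall>x. F x = norm x ^ 2 * Q2 x + x$i0 * B2 x + C2 x"
    using hpoly_sqnorm_division[OF F] by blast
  have "(x$i0 * B1 x + C1 x) * (x$i0 * B2 x + C2 x)
      = norm x ^ 2 * (W x - Q1 x * F x - Q2 x * (x$i0 * B1 x + C1 x))" for x
    using eq[of x] A_eq F_eq by (simp add: algebra_simps)
  moreover have "poly_on_lines (\<lambda>x. W x - Q1 x * F x - Q2 x * (x$i0 * B1 x + C1 x))"
    using Q1 Q2 B1 C1 F
    by (intro poly_on_lines_diff poly_on_lines_mult poly_on_lines_add W poly_on_lines_coord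
        hpoly_minus_imp_poly_on_lines hpoly_imp_poly_on_lines)
  ultimately have "(\<forall>x. B1 x = 0 \<and> C1 x = 0) \<or> (\<forall>x. B2 x = 0 \<and> C2 x = 0)"
    using B1 B2 C1 C2
    by (intro coord_affine_product_eq_sqnorm_mult[OF card fB1 fB2 fC1 fC2])
      (auto intro: hpoly_minus_imp_poly_on_lines hpoly_imp_poly_on_lines)
  moreover have "\<not> (\<forall>x. B2 x = 0 \<and> C2 x = 0)"
  proof
    assume "\<forall>x. B2 x = 0 \<and> C2 x = 0"
    then have "sqnorm_dvd k F" using Q2 F_eq unfolding sqnorm_dvd_def by auto
    then show False using F_not by contradiction
  qed
  ultimately show ?thesis using Q1 A_eq by auto
qed

lemma sqnorm_power_dvd:
  fixes F P G :: "real^'m::finite \<Rightarrow> real"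
  assumes card: "CARD('m) \<ge> 2" and k: "k \<ge> 1" and F: "hpoly k F" and F_not: "\<not> sqnorm_dvd k F"
    and P: "hpoly d P" and G: "poly_on_lines G"
    and eq: "\<And>x. P x * F x = (norm x ^ 2) ^ k * G x" and "i \<le> k"
  shows "\<exists>Q. hpoly_minus d (2 * i) Q \<and> (\<forall>x. P x = (norm x ^ 2) ^ i * Q x)"
  using \<open>i \<le> k\<close>
proof (induction i)
  case 0
  show ?case using P by (intro exI[of _ P]) simp
next
  case (Suc i)
  then obtain Q where Q: "hpoly_minus d (2 * i) Q" and P_eq: "\<forall>x. P x = (norm x ^ 2) ^ i * Q x"
    by auto
  show ?case
  proof (cases "2 * i \<le> d")
    case True
    have "Q x * F x = norm x ^ 2 * ((norm x ^ 2) ^ (k - i - 1) * G x)" for x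
    proof (cases "x = 0")
      case True
      then show ?thesis using hpoly_at_0[OF F k] by simp
    next
      case False
      have "(norm x ^ 2) ^ i * (Q x * F x)
          = (norm x ^ 2) ^ i * (norm x ^ 2 * ((norm x ^ 2) ^ (k - i - 1) * G x))"
        using eq[of x] P_eq Suc.prems by (simp add: algebra_simps flip: power_add power_Suc)
      then show ?thesis using False by simp
    qed
    moreover have "hpoly (d - 2 * i) Q" using Q True by (simp add: hpoly_minus_def)
    moreover have "poly_on_lines (\<lambda>x. (norm x ^ 2) ^ (k - i - 1) * G x)"
      by (intro poly_on_lines_mult poly_on_lines_power G hpoly_imp_poly_on_lines[OF hpoly_norm_power2])
    ultimately obtain Q' where "hpoly_minus (d - 2 * i) 2 Q'" "\<forall>x. Q x = norm x ^ 2 * Q' x"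
      using sqnorm_prime[OF card _ F F_not] by blast
    then show ?thesis
      using P_eq hpoly_minus_shift[OF True, of 2 Q'] by (intro exI[of _ Q']) (simp add: algebra_simps)
  next
    case False
    then have "\<forall>x. P x = (norm x ^ 2) ^ Suc i * 0"
      using Q P_eq by (simp add: hpoly_minus_zero_iff)
    then show ?thesis using False hpoly_minus_zero by (intro exI[of _ "\<lambda>x. 0"]) auto
  qed
qed

lemma sqnorm_power_dvd_imp_zero:
  fixes F P G :: "real^'m::finite \<Rightarrow> real"
  assumes "CARD('m) \<ge> 2" and "k \<ge> 1" and "hpoly k F" and "\<not> sqnorm_dvd k F"
    and "hpoly (2 * k - 2) P" and "poly_on_lines G"
    and "\<And>x. P x * F x = (norm x ^ 2) ^ k * G x"
  shows "P x = 0"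
proof -
  obtain Q where "hpoly_minus (2 * k - 2) (2 * k) Q" "\<forall>x. P x = (norm x ^ 2) ^ k * Q x"
    using sqnorm_power_dvd[OF assms order_refl] by blast
  then show ?thesis using \<open>k \<ge> 1\<close> by (simp add: hpoly_minus_zero_iff)
qed

section \<open>Derivatives of polynomial maps\<close>

definition partial :: "'m::finite \<Rightarrow> (real^'m \<Rightarrow> real) \<Rightarrow> real^'m \<Rightarrow> real" where
  "partial i p x = frechet_derivative p (at x) (axis i 1)"

definition laplacian :: "(real^'m::finite \<Rightarrow> real) \<Rightarrow> real^'m \<Rightarrow> real" where
  "laplacian p x = (\<Sum>i\<in>UNIV. partial i (partial i p) x)"

lemma hpoly_gradient_exists:
  fixes p :: "real^'m::finite \<Rightarrow> real"
  assumes "hpoly d p"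
  shows "\<exists>D. (\<forall>i. hpoly_minus d 1 (D i)) \<and> (\<forall>x. (p has_derivative (\<lambda>h. \<Sum>i\<in>UNIV. h$i * D i x)) (at x))"
  using assms
proof (induction rule: hpoly.induct)
  case (hpoly_const c)
  have "((\<lambda>x. c) has_derivative (\<lambda>h. \<Sum>i\<in>UNIV. h$i * 0)) (at x)" for x :: "real^'m"
    by (simp add: has_derivative_const)
  then show ?case using hpoly_minus_zero by (intro exI[of _ "\<lambda>i x. 0"]) auto
next
  case (hpoly_coord_mult d p i)
  then obtain D where D: "\<forall>l. hpoly_minus d 1 (D l)"
    and D_deriv: "\<forall>x. (p has_derivative (\<lambda>h. \<Sum>l\<in>UNIV. h$l * D l x)) (at x)" by blast
  define D' where "D' l x = x$i * D l x + (if l = i then p x else 0)" for l x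
  have "hpoly_minus (Suc d) 1 (D' l)" for l
  proof -
    have "hpoly_minus (Suc d) 1 (\<lambda>x. if l = i then p x else 0)"
      using hpoly_coord_mult(1) hpoly_zero by (cases "l = i") (simp_all add: hpoly_minus_def)
    then show ?thesis
      unfolding D'_def using D by (intro hpoly_minus_add hpoly_minus_coord_mult) auto
  qed
  moreover have "((\<lambda>x. x$i * p x) has_derivative (\<lambda>h. \<Sum>l\<in>UNIV. h$l * D' l x)) (at x)" for x
  proof -
    have D': "(\<Sum>l\<in>UNIV. h$l * D' l x) = x$i * (\<Sum>l\<in>UNIV. h$l * D l x) + h$i * p x" for h
      unfolding D'_def by (simp add: algebra_simps sum.distrib sum_distrib_left if_distrib[of "(*) _"]
        cong: if_cong)
    have "((\<lambda>x::real^'m. x$i) has_derivative (\<lambda>h. h$i)) (at x)"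
      by (rule bounded_linear_imp_has_derivative) (rule bounded_linear_vec_nth)
    from has_derivative_mult[OF this D_deriv[rule_format, of x]] show ?thesis
      by (rule has_derivative_eq_rhs) (simp add: fun_eq_iff D')
  qed
  ultimately show ?case by blast
next
  case (hpoly_add d p q)
  then obtain D1 D2 where D: "\<forall>l. hpoly_minus d 1 (D1 l)" "\<forall>l. hpoly_minus d 1 (D2 l)"
    and "\<forall>x. (p has_derivative (\<lambda>h. \<Sum>l\<in>UNIV. h$l * D1 l x)) (at x)"
    and "\<forall>x. (q has_derivative (\<lambda>h. \<Sum>l\<in>UNIV. h$l * D2 l x)) (at x)" by blast
  then have "((\<lambda>x. p x + q x) has_derivative (\<lambda>h. \<Sum>l\<in>UNIV. h$l * (D1 l x + D2 l x))) (at x)" for x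
    using has_derivative_add by (fastforce simp: distrib_left sum.distrib)
  then show ?case using D by (intro exI[of _ "\<lambda>l x. D1 l x + D2 l x"]) (auto intro: hpoly_minus_add)
qed

lemma
  fixes p :: "real^'m::finite \<Rightarrow> real"
  assumes "hpoly d p"
  shows hpoly_partial: "hpoly_minus d 1 (partial i p)"
    and has_derivative_hpoly: "(p has_derivative (\<lambda>h. \<Sum>i\<in>UNIV. h$i * partial i p x)) (at x)"
proof -
  obtain D where D: "\<forall>i. hpoly_minus d 1 (D i)"
    and D_deriv: "\<forall>x. (p has_derivative (\<lambda>h. \<Sum>i\<in>UNIV. h$i * D i x)) (at x)"
    using hpoly_gradient_exists[OF assms] by blast
  have "partial i p = D i" for i
  proof
    fix x
    have "(\<Sum>l\<in>UNIV. (axis i 1 :: real^'m)$l * D l x) = D i x"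
      by (simp add: axis_def if_distrib[of "\<lambda>a. a * _"] cong: if_cong)
    then show "partial i p x = D i x"
      unfolding partial_def frechet_derivative_at[OF D_deriv[rule_format, of x], symmetric] by simp
  qed
  then show "hpoly_minus d 1 (partial i p)" "(p has_derivative (\<lambda>h. \<Sum>i\<in>UNIV. h$i * partial i p x)) (at x)"
    using D D_deriv by simp_all
qed

lemma hpoly_minus_partial: "hpoly_minus d j p \<Longrightarrow> hpoly_minus d (Suc j) (partial i p)"
proof (cases "j \<le> d")
  case True
  assume "hpoly_minus d j p"
  then have "hpoly_minus (d - j) 1 (partial i p)"
    using True hpoly_partial[of "d - j" p i] by (simp add: hpoly_minus_def)
  then show ?thesis
    using hpoly_minus_shift[OF True, of 1] by (metis Suc_eq_plus1)
next
  case False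
  assume "hpoly_minus d j p"
  then have "partial i p = partial i (\<lambda>x. 0)" using False by (simp add: hpoly_minus_def)
  then show ?thesis using False hpoly_partial[OF hpoly_zero, of 0 i] by (simp add: hpoly_minus_def)
qed

lemma hpoly_minus_laplacian:
  assumes "hpoly d p"
  shows "hpoly_minus d 2 (laplacian p)"
proof -
  have "hpoly_minus d 2 (partial i (partial i p))" for i
    using hpoly_minus_partial[OF hpoly_partial[OF assms]] by (simp add: numeral_2_eq_2)
  then show ?thesis
    unfolding laplacian_def hpoly_minus_def by (auto intro: hpoly_sum split: if_splits)
qed

lemma has_real_derivative_hpoly_comp:
  fixes p :: "real^'m::finite \<Rightarrow> real"
  assumes "hpoly d p" and "(\<gamma> has_vector_derivative v) (at t)"
  shows "((\<lambda>t. p (\<gamma> t)) has_real_derivative (\<Sum>i\<in>UNIV. v$i * partial i p (\<gamma> t))) (at t)"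
  using has_derivative_compose[OF assms(2)[unfolded has_vector_derivative_def] has_derivative_hpoly[OF assms(1)]]
  unfolding has_field_derivative_def
  by (rule has_derivative_eq_rhs) (simp add: fun_eq_iff sum_distrib_left algebra_simps)

lemma hpoly_euler:
  fixes p :: "real^'m::finite \<Rightarrow> real"
  assumes "hpoly d p"
  shows "(\<Sum>i\<in>UNIV. x$i * partial i p x) = real d * p x"
proof -
  have "((\<lambda>t. t *\<^sub>R x) has_vector_derivative x) (at 1)"
    using has_vector_derivative_scaleR[OF DERIV_ident has_vector_derivative_const] by simp
  from has_real_derivative_hpoly_comp[OF assms this]
  have "((\<lambda>t. t ^ d * p x) has_real_derivative (\<Sum>i\<in>UNIV. x$i * partial i p x)) (at 1)"
    by (simp add: hpoly_homogeneous[OF assms])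
  moreover have "((\<lambda>t. t ^ d * p x) has_real_derivative (real d * p x)) (at 1)"
    by (auto intro!: derivative_eq_intros)
  ultimately show ?thesis using DERIV_unique by metis
qed

lemma hpoly_euler2:
  fixes p :: "real^'m::finite \<Rightarrow> real"
  assumes "hpoly d p"
  shows "(\<Sum>i\<in>UNIV. \<Sum>l\<in>UNIV. x$i * x$l * partial l (partial i p) x) = real d * (real d - 1) * p x"
proof -
  have "(\<Sum>l\<in>UNIV. x$l * partial l (partial i p) x) = real (d - 1) * partial i p x" for i
    using hpoly_euler[OF hpoly_minus_imp_hpoly[OF hpoly_partial[OF assms]]] by simp
  then have "(\<Sum>i\<in>UNIV. \<Sum>l\<in>UNIV. x$i * x$l * partial l (partial i p) x)
      = real (d - 1) * (\<Sum>i\<in>UNIV. x$i * partial i p x)"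
    by (simp add: sum_distrib_left[symmetric] mult.assoc) (simp add: sum_distrib_left algebra_simps)
  also have "\<dots> = real (d - 1) * (real d * p x)" using hpoly_euler[OF assms] by simp
  finally show ?thesis by (cases d) (simp_all add: algebra_simps)
qed

lemma has_vector_derivative_componentwise:
  assumes "\<And>i. ((\<lambda>t. f t $ i) has_real_derivative g i) (at t)"
  shows "(f has_vector_derivative (\<chi> i. g i)) (at t)"
  unfolding has_vector_derivative_def
proof (subst has_derivative_componentwise_within, intro ballI)
  fix b :: "real^'a" assume "b \<in> Basis"
  then obtain i where b: "b = axis i 1" unfolding Basis_vec_def by auto
  have inner_b: "y \<bullet> b = y $ i" for y :: "real^'a" unfolding b by (simp add: inner_axis)
  show "((\<lambda>x. f x \<bullet> b) has_derivative (\<lambda>x. x *\<^sub>R vec_lambda g \<bullet> b)) (at t)"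
    unfolding inner_b using assms[of i, unfolded has_field_derivative_def]
    by (rule has_derivative_eq_rhs) (simp add: fun_eq_iff)
qed

lemma vector_derivative_hpoly_comp:
  fixes F :: "real^'m::finite \<Rightarrow> real^'n::finite"
  assumes F: "\<And>j. hpoly k (\<lambda>x. F x $ j)" and \<gamma>: "\<And>t. (\<gamma> has_vector_derivative \<gamma>' t) (at t)"
  shows "vector_derivative (\<lambda>t. F (\<gamma> t)) (at s)
    = (\<chi> j. \<Sum>i\<in>UNIV. \<gamma>' s $ i * partial i (\<lambda>x. F x $ j) (\<gamma> s))"
  by (rule vector_derivative_at, rule has_vector_derivative_componentwise)
    (use has_real_derivative_hpoly_comp[OF F \<gamma>] in simp)

lemma vector_derivative2_hpoly_comp:
  fixes F :: "real^'m::finite \<Rightarrow> real^'n::finite"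
  assumes F: "\<And>j. hpoly k (\<lambda>x. F x $ j)" and \<gamma>: "\<And>t. (\<gamma> has_vector_derivative \<gamma>' t) (at t)"
    and \<gamma>': "\<And>i. ((\<lambda>s. \<gamma>' s $ i) has_real_derivative (\<gamma>'' $ i)) (at t)"
  shows "vector_derivative (\<lambda>s. vector_derivative (\<lambda>t. F (\<gamma> t)) (at s)) (at t) =
    (\<chi> j. \<Sum>i\<in>UNIV. \<gamma>'' $ i * partial i (\<lambda>x. F x $ j) (\<gamma> t) +
          \<gamma>' t $ i * (\<Sum>l\<in>UNIV. \<gamma>' t $ l * partial l (partial i (\<lambda>x. F x $ j)) (\<gamma> t)))"
  unfolding vector_derivative_hpoly_comp[OF F \<gamma>]
proof (rule vector_derivative_at, rule has_vector_derivative_componentwise)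
  fix j
  have "((\<lambda>s. \<gamma>' s $ i * partial i (\<lambda>x. F x $ j) (\<gamma> s)) has_real_derivative
     (\<gamma>'' $ i * partial i (\<lambda>x. F x $ j) (\<gamma> t)
      + \<gamma>' t $ i * (\<Sum>l\<in>UNIV. \<gamma>' t $ l * partial l (partial i (\<lambda>x. F x $ j)) (\<gamma> t)))) (at t)" for i
    using DERIV_mult[OF \<gamma>'[of i] has_real_derivative_hpoly_comp[OF
        hpoly_minus_imp_hpoly[OF hpoly_partial[OF F[of j]]] \<gamma>[of t]]]
    by (simp add: algebra_simps)
  then show "((\<lambda>s. (\<chi> j. \<Sum>i\<in>UNIV. \<gamma>' s $ i * partial i (\<lambda>x. F x $ j) (\<gamma> s)) $ j) has_real_derivative
      (\<Sum>i\<in>UNIV. \<gamma>'' $ i * partial i (\<lambda>x. F x $ j) (\<gamma> t) +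
          \<gamma>' t $ i * (\<Sum>l\<in>UNIV. \<gamma>' t $ l * partial l (partial i (\<lambda>x. F x $ j)) (\<gamma> t)))) (at t)"
    by (simp add: DERIV_sum)
qed

lemma has_vector_derivative_geod: "(geod x e has_vector_derivative (- sin t *\<^sub>R x + cos t *\<^sub>R e)) (at t)"
  unfolding geod_def by (auto intro!: derivative_eq_intros simp: algebra_simps)

lemma dphi_hpoly:
  fixes F :: "real^'m::finite \<Rightarrow> real^'n::finite"
  assumes "\<And>j. hpoly k (\<lambda>x. F x $ j)"
  shows "dphi F x e = (\<chi> j. \<Sum>i\<in>UNIV. e $ i * partial i (\<lambda>x. F x $ j) x)"
  unfolding dphi_def vector_derivative_hpoly_comp[OF assms has_vector_derivative_geod]
  by (simp add: geod_def)

lemma hess_amb_hpoly: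
  fixes F :: "real^'m::finite \<Rightarrow> real^'n::finite"
  assumes "\<And>j. hpoly k (\<lambda>x. F x $ j)"
  shows "hess_amb F x e = (\<chi> j. \<Sum>i\<in>UNIV. - x $ i * partial i (\<lambda>x. F x $ j) x +
          e $ i * (\<Sum>l\<in>UNIV. e $ l * partial l (partial i (\<lambda>x. F x $ j)) x))"
proof -
  have "((\<lambda>s. (- sin s *\<^sub>R x + cos s *\<^sub>R e) $ i) has_real_derivative (- x) $ i) (at 0)" for i
    by (auto intro!: derivative_eq_intros)
  from vector_derivative2_hpoly_comp[OF assms has_vector_derivative_geod this] show ?thesis
    unfolding hess_amb_def by (simp add: geod_def)
qed

lemma second_partial_axis_hpoly:
  fixes F :: "real^'m::finite \<Rightarrow> real^'n::finite"
  assumes "\<And>j. hpoly k (\<lambda>x. F x $ j)"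
  shows "second_partial F x (axis i 1) = (\<chi> j. partial i (partial i (\<lambda>x. F x $ j)) x)"
proof -
  have "((\<lambda>t. x + t *\<^sub>R axis i 1) has_vector_derivative axis i 1) (at t)" for t
    by (auto intro!: derivative_eq_intros)
  from vector_derivative2_hpoly_comp[OF assms this, of 0 0] show ?thesis
    unfolding second_partial_def
    by (simp add: axis_def if_distrib[of "\<lambda>a. a * _"] cong: if_cong)
qed

lemma has_real_derivative_hpoly_axis:
  fixes p :: "real^'m::finite \<Rightarrow> real"
  assumes "hpoly d p"
  shows "((\<lambda>t. p (x + t *\<^sub>R axis i 1)) has_real_derivative partial i p (x + t *\<^sub>R axis i 1)) (at t)"
proof -
  have "((\<lambda>t. x + t *\<^sub>R axis i 1) has_vector_derivative axis i 1) (at t)"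
    by (auto intro!: derivative_eq_intros)
  from has_real_derivative_hpoly_comp[OF assms this] show ?thesis
    by (simp add: axis_def if_distrib[of "\<lambda>a. a * _"] cong: if_cong)
qed

section \<open>Orthonormal frames of the sphere\<close>

definition orthonormal_basis :: "(real^'m::finite) set \<Rightarrow> bool" where
  "orthonormal_basis B \<longleftrightarrow> finite B \<and> pairwise orthogonal B \<and> (\<forall>b\<in>B. norm b = 1) \<and> span B = UNIV"

lemma orthonormal_basis_sum_coord_mult:
  assumes "orthonormal_basis (B :: (real^'m::finite) set)"
  shows "(\<Sum>b\<in>B. b$i * b$l) = (if i = l then 1 else 0)"
proof -
  have "(\<Sum>b\<in>B. (axis l 1 \<bullet> b) *\<^sub>R b) = (axis l 1 :: real^'m)"
    using assms unfolding orthonormal_basis_def by (intro orthonormal_basis_expand) auto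
  from arg_cong[OF this, of "\<lambda>v. v $ i"]
  have "(\<Sum>b\<in>B. b$l * b$i) = (axis l 1 :: real^'m) $ i"
    by (simp add: sum_component inner_axis' mult.commute del: vector_componentwise)
  then show ?thesis by (simp add: axis_def mult.commute)
qed

lemma orthonormal_basis_trace:
  assumes "orthonormal_basis (B :: (real^'m::finite) set)"
  shows "(\<Sum>b\<in>B. \<Sum>i\<in>UNIV. \<Sum>l\<in>UNIV. b$i * b$l * c i l) = (\<Sum>i\<in>UNIV. c i i)"
proof -
  have "(\<Sum>b\<in>B. \<Sum>i\<in>UNIV. \<Sum>l\<in>UNIV. b$i * b$l * c i l)
      = (\<Sum>i\<in>UNIV. \<Sum>l\<in>UNIV. (\<Sum>b\<in>B. b$i * b$l) * c i l)"
    by (simp add: sum.swap[of _ B] sum_distrib_right)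
  also have "\<dots> = (\<Sum>i\<in>UNIV. \<Sum>l\<in>UNIV. if l = i then c i i else 0)"
    by (intro sum.cong) (auto simp: orthonormal_basis_sum_coord_mult[OF assms])
  finally show ?thesis by simp
qed

lemma tangent_basis_completion:
  fixes x :: "real^'m::finite"
  assumes x: "norm x = 1"
  defines "B \<equiv> tangent_basis x"
  shows "x \<notin> B" and "orthonormal_basis (insert x B)"
proof -
  let ?S = "{v::real^'m. v \<bullet> x = 0}"
  have sub: "subspace ?S"
    using subspace_orthogonal_to_vector[of x] by (simp add: orthogonal_def inner_commute)
  obtain B0 where "B0 \<subseteq> ?S" "pairwise orthogonal B0" "\<And>x. x \<in> B0 \<Longrightarrow> norm x = 1" "span B0 = ?S"
    using orthonormal_basis_subspace[OF sub] by metis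
  then have "tangent_onb x B0" unfolding tangent_onb_def by auto
  then have "tangent_onb x B" unfolding B_def tangent_basis_def by (rule someI)
  then have BS: "B \<subseteq> ?S" and po: "pairwise orthogonal B" and nb: "\<forall>e\<in>B. norm e = 1"
    and sp: "span B = ?S"
    unfolding tangent_onb_def by auto
  have xx: "x \<bullet> x = 1" using x by (simp add: norm_eq_sqrt_inner)
  show "x \<notin> B" using BS xx by auto
  have po': "pairwise orthogonal (insert x B)"
    using po BS unfolding pairwise_insert orthogonal_def by (auto simp: inner_commute)
  have "0 \<notin> insert x B" using nb x by auto
  with po' have "finite (insert x B)"
    by (intro independent_imp_finite pairwise_orthogonal_independent)
  moreover have "span (insert x B) = UNIV"
  proof -
    have "v \<in> span (insert x B)" for v
    proof -
      have "v - (v \<bullet> x) *\<^sub>R x \<in> ?S" using xx by (simp add: inner_diff_left)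
      then have "v - (v \<bullet> x) *\<^sub>R x \<in> span (insert x B)"
        using sp span_mono[of B "insert x B"] by auto
      moreover have "(v \<bullet> x) *\<^sub>R x \<in> span (insert x B)" by (intro span_mul span_base) simp
      ultimately show ?thesis using span_add by fastforce
    qed
    then show ?thesis by auto
  qed
  ultimately show "orthonormal_basis (insert x B)"
    unfolding orthonormal_basis_def using po' nb x by auto
qed

lemma card_tangent_basis:
  fixes x :: "real^'m::finite"
  assumes "norm x = 1"
  shows "card (tangent_basis x) = CARD('m) - 1"
proof -
  have onb: "orthonormal_basis (insert x (tangent_basis x))"
    by (rule tangent_basis_completion(2)[OF assms])
  then have "0 \<notin> insert x (tangent_basis x)"
    unfolding orthonormal_basis_def by fastforce
  then have "independent (insert x (tangent_basis x))" "span (insert x (tangent_basis x)) = UNIV"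
    using onb pairwise_orthogonal_independent unfolding orthonormal_basis_def by blast+
  then have "card (insert x (tangent_basis x)) = CARD('m)"
    using basis_card_eq_dim[of "insert x (tangent_basis x)" UNIV] by simp
  then show ?thesis
    using tangent_basis_completion[OF assms] unfolding orthonormal_basis_def by simp
qed

lemma trace_tangent_basis:
  fixes x :: "real^'m::finite"
  assumes "norm x = 1"
  shows "(\<Sum>e\<in>tangent_basis x. \<Sum>i\<in>UNIV. \<Sum>l\<in>UNIV. e$i * e$l * c i l)
       = (\<Sum>i\<in>UNIV. c i i) - (\<Sum>i\<in>UNIV. \<Sum>l\<in>UNIV. x$i * x$l * c i l)"
proof -
  have "finite (tangent_basis x)"
    using tangent_basis_completion(2)[OF assms] unfolding orthonormal_basis_def by simp
  then show ?thesis
    using orthonormal_basis_trace[OF tangent_basis_completion(2)[OF assms], of c]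
      tangent_basis_completion(1)[OF assms] by (simp add: sum.insert)
qed

section \<open>Harmonic polynomial maps between spheres\<close>

lemma norm_power2_add_axis: "norm (x + t *\<^sub>R axis i 1) ^ 2 = norm x ^ 2 + 2 * t * x$i + t^2"
proof -
  have "norm (x + t *\<^sub>R axis i 1) ^ 2
      = (\<Sum>l\<in>UNIV. x$l * x$l + (if l = i then 2 * t * x$i + t^2 else 0))"
    unfolding norm_power2_eq_sum by (intro sum.cong) (auto simp: axis_def power2_eq_square algebra_simps)
  then show ?thesis unfolding norm_power2_eq_sum by (simp add: sum.distrib)
qed

text \<open>Differentiate \<open>norm (F (x + t e\<^sub>i)) ^ 2 = (norm x ^ 2 + 2 t x\<^sub>i + t\<^sup>2) ^ k\<close> twice at
  \<open>t = 0\<close>.\<close>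
lemma isometric_form_identity_axis:
  fixes F :: "real^'m::finite \<Rightarrow> real^'n::finite"
  assumes F: "\<And>j. hpoly k (\<lambda>x. F x $ j)" and norm_F: "\<And>y. norm (F y) = norm y ^ k"
    and x: "norm x = 1"
  shows "(\<Sum>j\<in>UNIV. (partial i (\<lambda>x. F x $ j) x)^2 + F x $ j * partial i (partial i (\<lambda>x. F x $ j)) x)
         = real k * (2 * (real k - 1) * (x$i)^2 + 1)"
proof -
  let ?F = "\<lambda>j x. F x $ j"
  define \<gamma> where "\<gamma> t = x + t *\<^sub>R axis i 1" for t
  define u where "u t = 1 + 2 * t * x$i + t^2" for t
  have sq: "(\<lambda>t. \<Sum>j\<in>UNIV. (F (\<gamma> t) $ j)^2) = (\<lambda>t. u t ^ k)"
  proof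
    fix t
    have "(\<Sum>j\<in>UNIV. (F (\<gamma> t) $ j)^2) = norm (F (\<gamma> t)) ^ 2"
      unfolding norm_power2_eq_sum by (simp add: power2_eq_square)
    also have "\<dots> = (norm (\<gamma> t) ^ 2) ^ k"
      by (simp add: norm_F power_mult[symmetric] mult.commute)
    finally show "(\<Sum>j\<in>UNIV. (F (\<gamma> t) $ j)^2) = u t ^ k"
      unfolding u_def \<gamma>_def norm_power2_add_axis x by simp
  qed
  define \<phi> where "\<phi> t = (\<Sum>j\<in>UNIV. 2 * F (\<gamma> t) $ j * partial i (?F j) (\<gamma> t))" for t
  define \<psi> where "\<psi> t = real k * u t ^ (k - 1) * (2 * x$i + 2 * t)" for t
  have "((\<lambda>t. \<Sum>j\<in>UNIV. (F (\<gamma> t) $ j)^2) has_real_derivative \<phi> t) (at t)" for t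
    unfolding \<phi>_def \<gamma>_def
    by (intro DERIV_sum) (auto intro!: derivative_eq_intros has_real_derivative_hpoly_axis[OF F])
  then have "((\<lambda>t. u t ^ k) has_real_derivative \<phi> t) (at t)" for t
    unfolding sq .
  moreover have "((\<lambda>t. u t ^ k) has_real_derivative \<psi> t) (at t)" for t
    unfolding \<psi>_def u_def by (auto intro!: derivative_eq_intros)
  ultimately have "\<phi> = \<psi>" using DERIV_unique by blast
  moreover have "(\<phi> has_real_derivative
      (\<Sum>j\<in>UNIV. 2 * ((partial i (?F j) x)^2 + F x $ j * partial i (partial i (?F j)) x))) (at 0)"
    unfolding \<phi>_def \<gamma>_def
    by (intro DERIV_sum) (auto intro!: derivative_eq_intros has_real_derivative_hpoly_axis[OF F]
        has_real_derivative_hpoly_axis[OF hpoly_minus_imp_hpoly[OF hpoly_partial[OF F]]]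
        simp: algebra_simps power2_eq_square)
  moreover have "(\<psi> has_real_derivative real k * (2 * real (k - 1) * (2 * x$i) * x$i + 2)) (at 0)"
    unfolding \<psi>_def u_def
    by (cases k) (auto intro!: derivative_eq_intros simp: algebra_simps)
  ultimately have "(\<Sum>j\<in>UNIV. 2 * ((partial i (?F j) x)^2 + F x $ j * partial i (partial i (?F j)) x))
      = real k * (2 * real (k - 1) * (2 * x$i) * x$i + 2)"
    using DERIV_unique by blast
  then have "2 * (\<Sum>j\<in>UNIV. (partial i (?F j) x)^2 + F x $ j * partial i (partial i (?F j)) x)
      = real k * (2 * real (k - 1) * (2 * x$i) * x$i + 2)"
    by (simp add: sum_distrib_left)
  then show ?thesis by (cases k) (simp_all add: power2_eq_square algebra_simps)
qed

lemma isometric_form_identity: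
  fixes F :: "real^'m::finite \<Rightarrow> real^'n::finite"
  assumes F: "\<And>j. hpoly k (\<lambda>x. F x $ j)" and norm_F: "\<And>y. norm (F y) = norm y ^ k"
    and x: "norm x = 1"
  shows "(\<Sum>i\<in>UNIV. \<Sum>j\<in>UNIV. (partial i (\<lambda>x. F x $ j) x)^2)
      + (\<Sum>j\<in>UNIV. F x $ j * laplacian (\<lambda>x. F x $ j) x) = real k * (2 * real k + real CARD('m) - 2)"
proof -
  have "(\<Sum>i\<in>UNIV. \<Sum>j\<in>UNIV. (partial i (\<lambda>x. F x $ j) x)^2)
      + (\<Sum>j\<in>UNIV. F x $ j * laplacian (\<lambda>x. F x $ j) x)
      = (\<Sum>i\<in>UNIV. \<Sum>j\<in>UNIV. (partial i (\<lambda>x. F x $ j) x)^2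
          + F x $ j * partial i (partial i (\<lambda>x. F x $ j)) x)"
    unfolding laplacian_def
    by (simp add: sum.distrib sum_distrib_left sum.swap[of _ "UNIV::'m set"])
  also have "\<dots> = (\<Sum>i\<in>UNIV. real k * (2 * (real k - 1) * (x$i)^2 + 1))"
    using isometric_form_identity_axis[OF F norm_F x] by simp
  also have "\<dots> = (\<Sum>i\<in>UNIV. (2 * real k * (real k - 1)) * (x$i)^2 + real k)"
    by (simp add: algebra_simps)
  also have "\<dots> = 2 * real k * (real k - 1) * (\<Sum>i\<in>UNIV. (x$i)^2) + real k * real CARD('m)"
    by (simp add: sum.distrib sum_distrib_left)
  also have "(\<Sum>i\<in>UNIV. (x$i)^2) = 1"
    using x norm_power2_eq_sum[of x] by (simp add: power2_eq_square)
  finally show ?thesis by (simp add: algebra_simps)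
qed

lemma sum_hess_amb_tangent_basis:
  fixes F :: "real^'m::finite \<Rightarrow> real^'n::finite"
  assumes F: "\<And>j. hpoly k (\<lambda>x. F x $ j)" and x: "norm x = 1"
  shows "(\<Sum>e\<in>tangent_basis x. hess_amb F x e) = (\<chi> j. laplacian (\<lambda>x. F x $ j) x)
    - (real k * (real k - 1) + real (CARD('m) - 1) * real k) *\<^sub>R F x"
proof -
  have "(\<Sum>e\<in>tangent_basis x. hess_amb F x e) $ j
      = laplacian (\<lambda>x. F x $ j) x - (real k * (real k - 1) + real (CARD('m) - 1) * real k) * F x $ j"
    for j
  proof -
    let ?Fj = "\<lambda>x. F x $ j"
    have "(\<Sum>e\<in>tangent_basis x. hess_amb F x e) $ j
        = (\<Sum>e\<in>tangent_basis x. - (\<Sum>i\<in>UNIV. x $ i * partial i ?Fj x)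
            + (\<Sum>i\<in>UNIV. \<Sum>l\<in>UNIV. e$i * e$l * partial l (partial i ?Fj) x))"
      unfolding hess_amb_hpoly[OF F] sum_component
      by (intro sum.cong) (simp_all add: sum.distrib sum_distrib_left mult.assoc sum_negf sum_subtractf)
    also have "\<dots> = - real (card (tangent_basis x)) * (\<Sum>i\<in>UNIV. x $ i * partial i ?Fj x)
        + (\<Sum>e\<in>tangent_basis x. \<Sum>i\<in>UNIV. \<Sum>l\<in>UNIV. e$i * e$l * partial l (partial i ?Fj) x)"
      by (simp add: sum.distrib sum_subtractf)
    also have "\<dots> = - real (CARD('m) - 1) * (real k * F x $ j)
        + (laplacian ?Fj x - real k * (real k - 1) * F x $ j)"
      unfolding trace_tangent_basis[OF x] hpoly_euler2[OF F] hpoly_euler[OF F] card_tangent_basis[OF x]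
      by (simp add: laplacian_def)
    finally show ?thesis by (simp add: algebra_simps)
  qed
  then show ?thesis by (simp add: vec_eq_iff)
qed

lemma tension_hpoly:
  fixes F :: "real^'m::finite \<Rightarrow> real^'n::finite"
  assumes F: "\<And>j. hpoly k (\<lambda>x. F x $ j)" and x: "norm x = 1" and Fx: "norm (F x) = 1"
  defines "L \<equiv> \<chi> j. laplacian (\<lambda>x. F x $ j) x"
  shows "tension F x = L - (L \<bullet> F x) *\<^sub>R F x"
proof -
  have "F x \<bullet> F x = 1" using Fx by (simp add: norm_eq_sqrt_inner)
  then show ?thesis
    unfolding tension_def Let_def sum_hess_amb_tangent_basis[OF F x] L_def
    by (simp add: inner_diff_left algebra_simps)
qed

lemma energy_density_hpoly:
  fixes F :: "real^'m::finite \<Rightarrow> real^'n::finite"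
  assumes F: "\<And>j. hpoly k (\<lambda>x. F x $ j)" and norm_F: "\<And>y. norm (F y) = norm y ^ k"
    and x: "norm x = 1"
  shows "energy_density F x
    = (real k * (real k + real CARD('m) - 2) - (\<Sum>j\<in>UNIV. F x $ j * laplacian (\<lambda>x. F x $ j) x)) / 2"
proof -
  define c where "c i l = (\<Sum>j\<in>UNIV. partial i (\<lambda>x. F x $ j) x * partial l (\<lambda>x. F x $ j) x)" for i l
  have dphi_sq: "(norm (dphi F x e))^2 = (\<Sum>i\<in>UNIV. \<Sum>l\<in>UNIV. e$i * e$l * c i l)" for e
  proof -
    have "(norm (dphi F x e))^2 = (\<Sum>j\<in>UNIV. (\<Sum>i\<in>UNIV. e $ i * partial i (\<lambda>x. F x $ j) x)
        * (\<Sum>l\<in>UNIV. e $ l * partial l (\<lambda>x. F x $ j) x))"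
      unfolding dphi_hpoly[OF F] norm_power2_eq_sum by simp
    then show ?thesis
      unfolding c_def
      by (simp add: sum_product sum_distrib_left sum.swap[of _ "UNIV::'n set"] algebra_simps)
  qed
  have radial: "(\<Sum>i\<in>UNIV. \<Sum>l\<in>UNIV. x$i * x$l * c i l) = real k ^ 2"
  proof -
    have "(\<Sum>i\<in>UNIV. \<Sum>l\<in>UNIV. x$i * x$l * c i l)
        = (\<Sum>j\<in>UNIV. (\<Sum>i\<in>UNIV. x $ i * partial i (\<lambda>x. F x $ j) x)
          * (\<Sum>l\<in>UNIV. x $ l * partial l (\<lambda>x. F x $ j) x))"
      unfolding c_def
      by (simp add: sum_product sum_distrib_left sum.swap[of _ "UNIV::'n set"] algebra_simps)
    also have "\<dots> = real k ^ 2 * norm (F x) ^ 2"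
      unfolding hpoly_euler[OF F] norm_power2_eq_sum by (simp add: sum_distrib_left algebra_simps power2_eq_square)
    finally show ?thesis using norm_F[of x] x by simp
  qed
  have trace: "(\<Sum>i\<in>UNIV. c i i) = real k * (2 * real k + real CARD('m) - 2)
      - (\<Sum>j\<in>UNIV. F x $ j * laplacian (\<lambda>x. F x $ j) x)"
    using isometric_form_identity[OF F norm_F x] unfolding c_def by (simp add: power2_eq_square)
  have "energy_density F x = (\<Sum>e\<in>tangent_basis x. \<Sum>i\<in>UNIV. \<Sum>l\<in>UNIV. e$i * e$l * c i l) / 2"
    unfolding energy_density_def dphi_sq ..
  also have "\<dots> = ((\<Sum>i\<in>UNIV. c i i) - real k ^ 2) / 2"
    unfolding trace_tangent_basis[OF x] radial ..
  finally show ?thesis unfolding trace by (simp add: power2_eq_square algebra_simps)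
qed

lemma homogeneous_parallel_on_sphere:
  fixes L F :: "real^'m::finite \<Rightarrow> real^'n::finite"
  assumes L: "\<And>j. hpoly a (\<lambda>x. L x $ j)" and F: "\<And>j. hpoly k (\<lambda>x. F x $ j)" and k: "k \<ge> 1"
    and parallel: "\<And>u. norm u = 1 \<Longrightarrow> L u = (L u \<bullet> F u) *\<^sub>R F u"
  shows "(L x \<bullet> F x) * F x $ j = (norm x ^ 2) ^ k * L x $ j"
proof (cases "x = 0")
  case True
  then show ?thesis using hpoly_at_0[OF F k] k by simp
next
  case False
  define u where "u = (1 / norm x) *\<^sub>R x"
  have x: "x = norm x *\<^sub>R u" and u: "norm u = 1" unfolding u_def using False by simp_all
  have scale: "L x = norm x ^ a *\<^sub>R L u" "F x = norm x ^ k *\<^sub>R F u"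
    using hpoly_homogeneous[OF L, of "norm x" u] hpoly_homogeneous[OF F, of "norm x" u]
    by (simp_all add: vec_eq_iff flip: x)
  have Lu: "L u $ j = (L u \<bullet> F u) * F u $ j"
    using arg_cong[OF parallel[OF u], of "\<lambda>v. v $ j"] by simp
  have "(L x \<bullet> F x) * F x $ j = norm x ^ a * (norm x ^ k) ^ 2 * ((L u \<bullet> F u) * F u $ j)"
    unfolding scale by (simp add: power2_eq_square algebra_simps)
  also have "(norm x ^ k) ^ 2 = (norm x ^ 2) ^ k"
    by (simp only: power_mult[symmetric] mult.commute)
  finally show ?thesis unfolding Lu[symmetric] scale by simp
qed

lemma laplacian_vanishes_if_parallel:
  fixes F :: "real^'m::finite \<Rightarrow> real^'n::finite"
  defines "L \<equiv> \<lambda>x. \<chi> j. laplacian (\<lambda>x. F x $ j) x"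
  assumes card: "CARD('m) \<ge> 2" and k: "k \<ge> 1" and F: "\<And>j. hpoly k (\<lambda>x. F x $ j)"
    and F_j0: "\<not> sqnorm_dvd k (\<lambda>x. F x $ j0)"
    and parallel: "\<And>u. norm u = 1 \<Longrightarrow> L u = (L u \<bullet> F u) *\<^sub>R F u"
  shows "laplacian (\<lambda>x. F x $ j) x = 0"
proof (cases "k \<ge> 2")
  case False
  then have "laplacian (\<lambda>x. F x $ j) = (\<lambda>x. 0)"
    using hpoly_minus_laplacian[OF F[of j]] by (simp add: hpoly_minus_zero_iff)
  then show ?thesis by simp
next
  case True
  have Lj: "hpoly (k - 2) (\<lambda>x. L x $ j)" for j
    using hpoly_minus_imp_hpoly[OF hpoly_minus_laplacian[OF F]] unfolding L_def by simp
  have eq: "(L x \<bullet> F x) * F x $ j = (norm x ^ 2) ^ k * L x $ j" for x j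
    by (rule homogeneous_parallel_on_sphere[OF Lj F k parallel])
  have "hpoly (k - 2 + k) (\<lambda>x. L x \<bullet> F x)"
    unfolding inner_vec_def inner_real_def by (intro hpoly_sum hpoly_mult Lj F) simp
  moreover have "k - 2 + k = 2 * k - 2" using True by simp
  ultimately have "L x \<bullet> F x = 0" for x
    using sqnorm_power_dvd_imp_zero[OF card k F F_j0 _ hpoly_imp_poly_on_lines[OF Lj] eq] by simp
  then have L0: "L x $ j = 0" if "x \<noteq> 0" for x
    using eq[of x j] that by simp
  have "L x $ j = 0"
  proof (cases "x = 0")
    case True
    have "L (0 *\<^sub>R 1) $ j = 0 ^ (k - 2) * L 1 $ j"
      by (rule hpoly_homogeneous[OF Lj])
    moreover have "(1 :: real^'m) \<noteq> 0" by (simp add: vec_eq_iff)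
    ultimately show ?thesis using True L0[of 1] by simp
  qed (rule L0)
  then show ?thesis unfolding L_def by simp
qed

lemma minimal_form_not_sqnorm_dvd:
  fixes F :: "real^'m::finite \<Rightarrow> real^'n::finite"
  assumes k: "k \<ge> 1"
    and minimal: "\<not> (\<exists>(G :: real^'m \<Rightarrow> real^'n) d. d < k \<and> is_form d G \<and> (\<forall>x\<in>unit_sphere. G x = F x))"
  shows "\<exists>j. \<not> sqnorm_dvd k (\<lambda>x. F x $ j)"
proof (rule ccontr)
  assume "\<nexists>j. \<not> sqnorm_dvd k (\<lambda>x. F x $ j)"
  then have "\<forall>j. \<exists>H. hpoly_minus k 2 H \<and> (\<forall>x. F x $ j = norm x ^ 2 * H x)"
    unfolding sqnorm_dvd_def by blast
  then obtain H where H: "\<And>j. hpoly_minus k 2 (H j)" and F_eq: "\<And>j x. F x $ j = norm x ^ 2 * H j x"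
    by (auto dest!: choice)
  define G where "G x = (\<chi> j. H j x)" for x
  have "is_form (k - 2) G"
    unfolding is_form_def G_def using hpoly_minus_imp_hpoly[OF H] by (simp add: hpoly_imp_hom_poly)
  moreover have "\<forall>x\<in>unit_sphere. G x = F x"
    unfolding unit_sphere_def G_def by (simp add: vec_eq_iff F_eq)
  moreover have "k - 2 < k" using k by simp
  ultimately show False using minimal by blast
qed

theorem mainTheorem1:
  fixes F :: "real^'m \<Rightarrow> real^'n" and k :: nat
  assumes "CARD('m) \<ge> 2" and "CARD('n) \<ge> 2" and "k \<ge> 1"
    and "is_form k F"
    and "\<forall>x. norm (F x) = norm x ^ k"
    and "\<not> (\<exists>(G :: real^'m \<Rightarrow> real^'n) d. d < k \<and> is_form d G
                \<and> (\<forall>x\<in>unit_sphere. G x = F x))"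
    and "harmonic_sph F"
  shows "(\<forall>x\<in>unit_sphere.
            energy_density F x = real k * (real k + real (CARD('m) - 1) - 1) / 2)
         \<and> (\<forall>x. lap0 F x = 0)"
proof -
  let ?L = "\<lambda>x. \<chi> j. laplacian (\<lambda>x. F x $ j) x"
  have F: "hpoly k (\<lambda>x. F x $ j)" for j
    using assms(4) unfolding is_form_def by (simp add: hom_poly_imp_hpoly)
  have norm_F: "norm (F x) = norm x ^ k" for x using assms(5) by simp
  obtain j0 where "\<not> sqnorm_dvd k (\<lambda>x. F x $ j0)"
    using minimal_form_not_sqnorm_dvd[OF assms(3,6)] by blast
  moreover have "?L u = (?L u \<bullet> F u) *\<^sub>R F u" if "norm u = 1" for u
    using assms(7) tension_hpoly[OF F that] norm_F[of u] that
    unfolding harmonic_sph_def unit_sphere_def by simp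
  ultimately have laplacian_0: "laplacian (\<lambda>x. F x $ j) x = 0" for j x
    using laplacian_vanishes_if_parallel[OF assms(1,3) F] by blast
  have "energy_density F x = real k * (real k + real (CARD('m) - 1) - 1) / 2" if "norm x = 1" for x
    using energy_density_hpoly[OF F norm_F that] laplacian_0 by (simp add: of_nat_diff algebra_simps)
  moreover have "lap0 F x = 0" for x
    unfolding lap0_def second_partial_axis_hpoly[OF F] using laplacian_0
    by (simp add: laplacian_def vec_eq_iff sum_component)
  ultimately show ?thesis unfolding unit_sphere_def by simp
qed

end
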